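(* Let $w$ be a word over $\{L,R\}$ (an orbit pattern tag of an eventually fixed orbit). Then (1) $w$ forces each of its tails, i.e. every word $v'$ such that $w=vv'$ for some word $v$; and (2) every word $u$ forced by $w$ satisfies $|u|\le |w|$.
   Context: An interval map is a continuous map $f\colon I\to I$ on a compact interval $I=[a,b]$, $a<b$. Words are finite strings (including the empty word) over $\{L,R\}$; $|w|$ denotes the length of $w$. For $x\in I$ put $x_1=x$, $x_{j+1}=f(x_j)$. If $x$ is eventually fixed, let $n\ge 0$ be least such that $x_{n+1}$ is a fixed point of $f$; the orbit pattern tag of $x$ is the word of length $n$ whose $j$-th letter ($1\le j\le n$) is $L$ if $x_{j+1}<x_j$ and $R$ if $x_{j+1}>x_j$ (a fixed point has the empty word as tag). The map $f$ admits the tag $w$ if some point of $I$ has orbit pattern tag $w$. A word $w$ forces a word $u$ if every interval map admitting the tag $w$ also admits the tag $u$. *)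

theory Defs
  imports "HOL-Analysis.Analysis"
begin

datatype letter = L | R

type_synonym word = "letter list"

definition interval_map :: "real \<Rightarrow> real \<Rightarrow> (real \<Rightarrow> real) \<Rightarrow> bool" where
  "interval_map a b f \<longleftrightarrow> a < b \<and> continuous_on {a..b} f \<and> f ` {a..b} \<subseteq> {a..b}"

text \<open>Orbit: x_1 = x, x_{j+1} = f x_j, so x_{k+1} = (f ^^ k) x.
  The tag of x has length n, the least n with x_{n+1} fixed; its (k+1)-th letter
  (k < n) is L if x_{k+2} < x_{k+1} and R if x_{k+2} > x_{k+1}.\<close>
definition orbit_tag :: "(real \<Rightarrow> real) \<Rightarrow> real \<Rightarrow> word \<Rightarrow> bool" where
  "orbit_tag f x w \<longleftrightarrow>
     f ((f ^^ length w) x) = (f ^^ length w) x \<and>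
     (\<forall>k < length w. f ((f ^^ k) x) \<noteq> (f ^^ k) x) \<and>
     (\<forall>k < length w. (w ! k = L \<longleftrightarrow> (f ^^ Suc k) x < (f ^^ k) x) \<and>
                       (w ! k = R \<longleftrightarrow> (f ^^ Suc k) x > (f ^^ k) x))"

definition admits :: "real \<Rightarrow> real \<Rightarrow> (real \<Rightarrow> real) \<Rightarrow> word \<Rightarrow> bool" where
  "admits a b f w \<longleftrightarrow> (\<exists>x \<in> {a..b}. orbit_tag f x w)"

definition forces :: "word \<Rightarrow> word \<Rightarrow> bool" where
  "forces w u \<longleftrightarrow> (\<forall>(a::real) b f. interval_map a b f \<longrightarrow> admits a b f w \<longrightarrow> admits a b f u)"

end

theory Submission
  imports Defs
begin

text \<open>Tails are forced because the orbit of a point with tag \<open>v @ v'\<close>, observed from its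
  \<open>|v|\<close>-th iterate on, has tag \<open>v'\<close>. For the length bound, one builds for every word \<open>w\<close>
  an interval map admitting \<open>w\<close> under which every point is fixed after \<open>|w|\<close> steps; such a
  map admits no longer tag. The map is built letter by letter: given \<open>f\<close> on \<open>[a, b]\<close> admitting
  \<open>w\<close> at \<open>x\<close>, extend it to \<open>[a - 1, b + 1]\<close> by interpolating linearly towards \<open>x\<close> on the
  two new unit intervals. Then \<open>b + 1\<close> has tag \<open>L # w\<close>, \<open>a - 1\<close> has tag \<open>R # w\<close>, and every
  point is sent into \<open>[a, b]\<close> in one step.\<close>

definition fixed_after :: "nat \<Rightarrow> real \<Rightarrow> real \<Rightarrow> (real \<Rightarrow> real) \<Rightarrow> bool" where
  "fixed_after n a b f \<longleftrightarrow> (\<forall>y\<in>{a..b}. f ((f ^^ n) y) = (f ^^ n) y)"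

lemma funpow_in_invariant:
  assumes "f ` S \<subseteq> S" "x \<in> S"
  shows "(f ^^ k) x \<in> S"
  using assms by (induction k) auto

lemma funpow_eq_on:
  assumes "\<forall>y\<in>S. g y = f y" "f ` S \<subseteq> S" "x \<in> S"
  shows "(g ^^ k) x = (f ^^ k) x"
  using assms funpow_in_invariant[OF assms(2,3)] by (induction k) auto

lemma orbit_tag_cong:
  assumes "\<And>k. (g ^^ k) x = (f ^^ k) x"
  shows "orbit_tag g x w \<longleftrightarrow> orbit_tag f x w"
proof -
  have "g ((g ^^ k) x) = f ((f ^^ k) x)" for k
    using assms[of "Suc k"] by simp
  then show ?thesis
    unfolding orbit_tag_def by (simp add: assms del: funpow.simps)
qed

lemma orbit_tag_Cons:
  "orbit_tag f x (c # w) \<longleftrightarrow>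
     f x \<noteq> x \<and> (c = L \<longleftrightarrow> f x < x) \<and> (c = R \<longleftrightarrow> x < f x) \<and> orbit_tag f (f x) w"
  unfolding orbit_tag_def by (simp add: All_less_Suc2 funpow_Suc_right del: funpow.simps) blast

lemma orbit_tag_append:
  assumes "orbit_tag f x (v @ v')"
  shows "orbit_tag f ((f ^^ length v) x) v'"
  using assms
  by (induction v arbitrary: x) (simp_all add: orbit_tag_Cons funpow_Suc_right del: funpow.simps)

lemma admits_append:
  assumes "interval_map a b f" "admits a b f (v @ v')"
  shows "admits a b f v'"
proof -
  obtain x where x: "x \<in> {a..b}" "orbit_tag f x (v @ v')"
    using assms(2) unfolding admits_def by blast
  have "f ` {a..b} \<subseteq> {a..b}"
    using assms(1) unfolding interval_map_def by blast
  then have "(f ^^ length v) x \<in> {a..b}"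
    using x(1) by (rule funpow_in_invariant)
  then show ?thesis
    using orbit_tag_append[OF x(2)] unfolding admits_def by blast
qed

lemma forces_suffix: "forces (v @ v') v'"
  unfolding forces_def by (blast intro: admits_append)

lemma orbit_tag_length_le:
  assumes "fixed_after n a b f" "y \<in> {a..b}" "orbit_tag f y u"
  shows "length u \<le> n"
proof (rule ccontr)
  assume "\<not> length u \<le> n"
  then have "f ((f ^^ n) y) \<noteq> (f ^^ n) y"
    using assms(3) unfolding orbit_tag_def by simp
  then show False
    using assms(1,2) unfolding fixed_after_def by blast
qed

lemma forces_length_le:
  assumes "forces w u" "interval_map a b f" "admits a b f w" "fixed_after (length w) a b f"
  shows "length u \<le> length w"
proof -
  have "admits a b f u"
    using assms(1-3) unfolding forces_def by blast
  then obtain y where "y \<in> {a..b}" "orbit_tag f y u"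
    unfolding admits_def by blast
  then show ?thesis
    using orbit_tag_length_le[OF assms(4)] by blast
qed

lemma interpolating_extension:
  assumes "interval_map a b f" "x \<in> {a..b}"
  obtains g where "continuous_on {a - 1..b + 1} g" "g ` {a - 1..b + 1} \<subseteq> {a..b}"
    "\<forall>y\<in>{a..b}. g y = f y" "g (a - 1) = x" "g (b + 1) = x"
proof
  define r where "r y = max a (min y b)" for y :: real
  define g where "g y = (1 - \<bar>y - r y\<bar>) * f (r y) + \<bar>y - r y\<bar> * x" for y
  have ab: "a < b" and f: "continuous_on {a..b} f" "f ` {a..b} \<subseteq> {a..b}"
    using assms(1) unfolding interval_map_def by auto
  have r: "r ` {a - 1..b + 1} \<subseteq> {a..b}"
    using ab unfolding r_def by auto
  have "continuous_on {a - 1..b + 1} (\<lambda>y. f (r y))"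
    by (rule continuous_on_compose2[OF f(1) _ r]) (auto simp: r_def intro!: continuous_intros)
  then show "continuous_on {a - 1..b + 1} g"
    unfolding g_def by (auto simp: r_def intro!: continuous_intros)
  show "g ` {a - 1..b + 1} \<subseteq> {a..b}"
  proof
    fix z assume "z \<in> g ` {a - 1..b + 1}"
    then obtain y where y: "y \<in> {a - 1..b + 1}" "z = g y" by blast
    have "r y \<in> {a..b}"
      using r y(1) by blast
    then have "f (r y) \<in> {a..b}"
      using f(2) by blast
    have "\<bar>y - r y\<bar> \<le> 1"
      using y(1) by (auto simp: r_def)
    then show "z \<in> {a..b}"
      using convexD_alt[OF convex_real_interval(5) \<open>f (r y) \<in> {a..b}\<close> assms(2)] y(2)
      by (simp add: g_def)
  qed
  show "\<forall>y\<in>{a..b}. g y = f y" "g (a - 1) = x" "g (b + 1) = x"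
    using ab by (auto simp: g_def r_def)
qed

lemma fixed_after_Suc_extension:
  assumes "fixed_after n a b f" "f ` {a..b} \<subseteq> {a..b}"
    and "\<forall>y\<in>{a..b}. g y = f y" "g ` {a'..b'} \<subseteq> {a..b}"
  shows "fixed_after (Suc n) a' b' g"
  unfolding fixed_after_def
proof
  fix y assume "y \<in> {a'..b'}"
  then have gy: "g y \<in> {a..b}" using assms(4) by blast
  have "(g ^^ Suc n) y = (f ^^ n) (g y)"
    using funpow_eq_on[OF assms(3,2) gy] by (simp add: funpow_Suc_right del: funpow.simps)
  moreover have "(f ^^ n) (g y) \<in> {a..b}"
    using funpow_in_invariant[OF assms(2) gy] .
  ultimately show "g ((g ^^ Suc n) y) = (g ^^ Suc n) y"
    using assms(1,3) gy unfolding fixed_after_def by simp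
qed

lemma admits_Cons_extension:
  assumes f: "interval_map a b f" "admits a b f w" "fixed_after (length w) a b f"
  obtains g where "interval_map (a - 1) (b + 1) g" "admits (a - 1) (b + 1) g (c # w)"
    "fixed_after (length (c # w)) (a - 1) (b + 1) g"
proof -
  obtain x where x: "x \<in> {a..b}" "orbit_tag f x w"
    using f(2) unfolding admits_def by blast
  obtain g where g: "continuous_on {a - 1..b + 1} g" "g ` {a - 1..b + 1} \<subseteq> {a..b}"
    "\<forall>y\<in>{a..b}. g y = f y" "g (a - 1) = x" "g (b + 1) = x"
    using interpolating_extension[OF f(1) x(1)] by blast
  have ab: "a < b" and fS: "f ` {a..b} \<subseteq> {a..b}"
    using f(1) unfolding interval_map_def by auto
  define q where "q = (if c = L then b + 1 else a - 1)"
  have "orbit_tag g x w"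
    using orbit_tag_cong[OF funpow_eq_on[OF g(3) fS x(1)]] x(2) by blast
  moreover have "g q = x"
    using g(4,5) by (simp add: q_def)
  ultimately have "orbit_tag g q (c # w)"
    using x(1) by (cases c) (auto simp: orbit_tag_Cons q_def)
  moreover have "q \<in> {a - 1..b + 1}"
    using ab by (simp add: q_def)
  ultimately have "admits (a - 1) (b + 1) g (c # w)"
    unfolding admits_def by blast
  moreover have "interval_map (a - 1) (b + 1) g"
    using ab g(1,2) unfolding interval_map_def by auto
  moreover have "fixed_after (length (c # w)) (a - 1) (b + 1) g"
    using fixed_after_Suc_extension[OF f(3) fS g(3,2)] by simp
  ultimately show thesis
    using that by blast
qed

lemma interval_map_admitting_fixed_after:
  "\<exists>a b f. interval_map a b f \<and> admits a b f w \<and> fixed_after (length w) a b f"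
proof (induction w)
  case Nil
  have "interval_map 0 1 id" "admits 0 1 id []" "fixed_after 0 0 1 id"
    by (auto simp: interval_map_def admits_def orbit_tag_def fixed_after_def)
  then show ?case by auto
next
  case (Cons c w)
  then obtain a b f where "interval_map a b f" "admits a b f w" "fixed_after (length w) a b f"
    by blast
  from admits_Cons_extension[OF this, of c] show ?case
    by blast
qed

theorem mainTheorem2:
  fixes w :: word
  shows "(\<forall>v v'. w = v @ v' \<longrightarrow> forces w v') \<and> (\<forall>u. forces w u \<longrightarrow> length u \<le> length w)"
proof (intro conjI allI impI)
  fix v v' assume "w = v @ v'"
  then show "forces w v'"
    using forces_suffix by blast
next
  fix u assume "forces w u"
  moreover obtain a b f where
    "interval_map a b f" "admits a b f w" "fixed_after (length w) a b f"
    using interval_map_admitting_fixed_after by blast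
  ultimately show "length u \<le> length w"
    using forces_length_le by blast
qed

end
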